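(* Let $H$ be a Hilbert space (not necessarily separable), let $M \subseteq B(H)$ be a von Neumann algebra, and let $\phi = \{\phi_t\}_{t \geq 0}$ be a CP-semigroup on $M$. For all $\xi \in H$ and $A \in M$, the function $f : [0,1] \to H$ given by $f(t) = \phi_t(A)\xi$ is strongly measurable and Bochner integrable on $[0,1]$.
   Context: A CP-semigroup on a von Neumann algebra $M$ is a family $\phi = \{\phi_t : M \to M\}_{t \geq 0}$ of contractive normal completely positive maps such that $\phi_0(A) = A$ for all $A \in M$, $\phi_{s+t} = \phi_s \circ \phi_t$ for all $s,t \geq 0$, and for all $A \in M$ and all $\omega \in M_*$ (the $\sigma$-weakly continuous linear functionals on $M$), $\lim_{t \to t_0} \omega(\phi_t(A)) = \omega(\phi_{t_0}(A))$ for every $t_0 \geq 0$. A function $g : [0,1] \to H$ is strongly measurable if there exists a sequence of countably-valued functions (each taking at most countably many values) converging to $g$ in norm Lebesgue-almost everywhere. *)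

theory Defs
  imports "HOL-Analysis.Analysis"
begin

text \<open>A complex Hilbert space is encoded as a real Hilbert space (real inner product space,
  complete) together with a complex structure: a real-linear map jmul (multiplication by i)
  with jmul (jmul x) = -x, which is orthogonal for the real inner product.  The complex inner
  product is recovered by cinner below (conjugate-linear in the first, linear in the second
  argument), and the real inner product is its real part.\<close>

class chilbert = real_inner + complete_space +
  fixes jmul :: "'a \<Rightarrow> 'a"
  assumes jmul_add: "jmul (x + y) = jmul x + jmul y"
    and jmul_scaleR: "jmul (r *\<^sub>R x) = r *\<^sub>R jmul x"
    and jmul_jmul: "jmul (jmul x) = - x"
    and inner_jmul: "inner (jmul x) (jmul y) = inner x y"

definition cscale :: "complex \<Rightarrow> 'h::chilbert \<Rightarrow> 'h" where
  "cscale c x = Re c *\<^sub>R x + Im c *\<^sub>R jmul x"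

definition cinner :: "'h::chilbert \<Rightarrow> 'h \<Rightarrow> complex" where
  "cinner x y = Complex (inner x y) (- inner x (jmul y))"

text \<open>B(H): bounded complex-linear operators, i.e. bounded real-linear maps commuting with i.\<close>

definition BH :: "('h::chilbert \<Rightarrow>\<^sub>L 'h) set" where
  "BH = {T. \<forall>x. blinfun_apply T (jmul x) = jmul (blinfun_apply T x)}"

definition opscale :: "complex \<Rightarrow> ('h::chilbert \<Rightarrow>\<^sub>L 'h) \<Rightarrow> ('h \<Rightarrow>\<^sub>L 'h)" where
  "opscale c A = Blinfun (\<lambda>x. cscale c (blinfun_apply A x))"

definition cadj :: "('h::chilbert \<Rightarrow>\<^sub>L 'h) \<Rightarrow> ('h \<Rightarrow>\<^sub>L 'h)" where
  "cadj T = (THE S. S \<in> BH \<and> (\<forall>x y. cinner (blinfun_apply T x) y = cinner x (blinfun_apply S y)))"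

definition commutant :: "('h::chilbert \<Rightarrow>\<^sub>L 'h) set \<Rightarrow> ('h \<Rightarrow>\<^sub>L 'h) set" where
  "commutant S = {T \<in> BH. \<forall>A\<in>S. T o\<^sub>L A = A o\<^sub>L T}"

text \<open>Von Neumann algebra: a self-adjoint subset of B(H) equal to its bicommutant
  (equivalently, by von Neumann's bicommutant theorem, a unital *-subalgebra closed in the
  weak operator topology).\<close>

definition von_neumann_algebra :: "('h::chilbert \<Rightarrow>\<^sub>L 'h) set \<Rightarrow> bool" where
  "von_neumann_algebra M \<longleftrightarrow> M \<subseteq> BH \<and> (\<forall>A\<in>M. cadj A \<in> M) \<and> commutant (commutant M) = M"

definition sigma_weak_topology :: "('h::chilbert \<Rightarrow>\<^sub>L 'h) topology" where
  "sigma_weak_topology = topology_generated_by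
     {(\<lambda>A. \<Sum>n. cinner (xi n) (blinfun_apply A (eta n))) -` U | xi eta U.
        summable (\<lambda>n. (norm (xi n))\<^sup>2) \<and> summable (\<lambda>n. (norm (eta n))\<^sup>2) \<and> open U}"

definition predual :: "('h::chilbert \<Rightarrow>\<^sub>L 'h) set \<Rightarrow> ((('h \<Rightarrow>\<^sub>L 'h) \<Rightarrow> complex) set)" where
  "predual M = {\<omega>. (\<forall>A\<in>M. \<forall>B\<in>M. \<omega> (A + B) = \<omega> A + \<omega> B) \<and>
                     (\<forall>A\<in>M. \<forall>c. \<omega> (opscale c A) = c * \<omega> A) \<and>
                     continuous_map (subtopology sigma_weak_topology M) euclidean \<omega>}"

text \<open>Positivity of an n x n matrix of operators, viewed as an operator on H^n.\<close>

definition op_matrix_pos :: "nat \<Rightarrow> (nat \<Rightarrow> nat \<Rightarrow> ('h::chilbert \<Rightarrow>\<^sub>L 'h)) \<Rightarrow> bool" where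
  "op_matrix_pos n A \<longleftrightarrow> (\<forall>xi :: nat \<Rightarrow> 'h.
     Im (\<Sum>i<n. \<Sum>j<n. cinner (xi i) (blinfun_apply (A i j) (xi j))) = 0 \<and>
     Re (\<Sum>i<n. \<Sum>j<n. cinner (xi i) (blinfun_apply (A i j) (xi j))) \<ge> 0)"

definition contractive_normal_cp_map ::
  "('h::chilbert \<Rightarrow>\<^sub>L 'h) set \<Rightarrow> (('h \<Rightarrow>\<^sub>L 'h) \<Rightarrow> ('h \<Rightarrow>\<^sub>L 'h)) \<Rightarrow> bool" where
  "contractive_normal_cp_map M \<phi> \<longleftrightarrow>
     (\<forall>A\<in>M. \<phi> A \<in> M) \<and>
     (\<forall>A\<in>M. \<forall>B\<in>M. \<phi> (A + B) = \<phi> A + \<phi> B) \<and>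
     (\<forall>A\<in>M. \<forall>c. \<phi> (opscale c A) = opscale c (\<phi> A)) \<and>
     (\<forall>A\<in>M. norm (\<phi> A) \<le> norm A) \<and>
     continuous_map (subtopology sigma_weak_topology M) sigma_weak_topology \<phi> \<and>
     (\<forall>n (A :: nat \<Rightarrow> nat \<Rightarrow> ('h \<Rightarrow>\<^sub>L 'h)).
        (\<forall>i<n. \<forall>j<n. A i j \<in> M) \<longrightarrow> op_matrix_pos n A \<longrightarrow> op_matrix_pos n (\<lambda>i j. \<phi> (A i j)))"

definition cp_semigroup ::
  "('h::chilbert \<Rightarrow>\<^sub>L 'h) set \<Rightarrow> (real \<Rightarrow> ('h \<Rightarrow>\<^sub>L 'h) \<Rightarrow> ('h \<Rightarrow>\<^sub>L 'h)) \<Rightarrow> bool" where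
  "cp_semigroup M \<phi> \<longleftrightarrow>
     (\<forall>t\<ge>0. contractive_normal_cp_map M (\<phi> t)) \<and>
     (\<forall>A\<in>M. \<phi> 0 A = A) \<and>
     (\<forall>s\<ge>0. \<forall>t\<ge>0. \<forall>A\<in>M. \<phi> (s + t) A = \<phi> s (\<phi> t A)) \<and>
     (\<forall>A\<in>M. \<forall>\<omega>\<in>predual M. \<forall>t0\<ge>0.
        ((\<lambda>t. \<omega> (\<phi> t A)) \<longlongrightarrow> \<omega> (\<phi> t0 A)) (at t0 within {0..}))"

definition strongly_measurable_on :: "real set \<Rightarrow> (real \<Rightarrow> 'b::real_normed_vector) \<Rightarrow> bool" where
  "strongly_measurable_on S f \<longleftrightarrow>
     (\<exists>g :: nat \<Rightarrow> real \<Rightarrow> 'b.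
        (\<forall>n. countable (g n ` S) \<and> (\<forall>v. {t\<in>S. g n t = v} \<in> sets lebesgue)) \<and>
        (AE t in lebesgue_on S. (\<lambda>n. g n t) \<longlonglongrightarrow> f t))"

definition bochner_integrable_on :: "real set \<Rightarrow> (real \<Rightarrow> 'b::real_normed_vector) \<Rightarrow> bool" where
  "bochner_integrable_on S f \<longleftrightarrow>
     (\<exists>s :: nat \<Rightarrow> real \<Rightarrow> 'b.
        (\<forall>n. finite (s n ` S) \<and> (\<forall>v. {t\<in>S. s n t = v} \<in> sets lebesgue)) \<and>
        (\<forall>n. (\<lambda>t. norm (f t - s n t)) \<in> borel_measurable (lebesgue_on S)) \<and>
        (\<lambda>n. \<integral>\<^sup>+ t. ennreal (norm (f t - s n t)) \<partial>lebesgue_on S) \<longlonglongrightarrow> 0)"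

end

theory Submission
  imports Defs
begin

(*
  For a CP-semigroup, t \<mapsto> <\<eta>, \<phi>_t(A) \<xi>> is continuous, because vector functionals are normal,
  and ||\<phi>_t(A) \<xi>|| \<le> ||A|| ||\<xi>||.  So it suffices to treat a bounded, weakly continuous
  f : [0,1] \<rightarrow> H.  Such an f is separably valued: a vector orthogonal to the values at countably
  many dense times is orthogonal to all values, so by the projection theorem every value lies in
  the closed span of countably many vectors.  On a countable dense subset Q of that span,
  ||y||^2 = sup {2 <q, y> - ||q||^2 | q \<in> Q}, so every t \<mapsto> ||f t - c|| is measurable (as in
  Pettis' theorem).  Choosing at time t the first element of an enumeration of Q within 1/(n+1)
  of f t gives countably valued measurable approximations; cutting them off outside a set of
  small measure, where ||f|| is bounded, gives the simple approximations in L^1.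
*)

section \<open>Nearest points in real inner product spaces\<close>

lemma parallelogram_midpoint:
  fixes x a b :: "'a::real_inner"
  shows "(norm (a - b))\<^sup>2 = 2 * (norm (x - a))\<^sup>2 + 2 * (norm (x - b))\<^sup>2 - 4 * (norm (x - (1/2) *\<^sub>R (a + b)))\<^sup>2"
  by (simp add: power2_norm_eq_inner inner_diff_left inner_diff_right inner_add_left inner_add_right
      inner_commute algebra_simps)

lemma Cauchy_minimizing_sequence:
  fixes x :: "'a::real_inner"
  assumes midpoint: "\<And>a b. a \<in> K \<Longrightarrow> b \<in> K \<Longrightarrow> (1/2) *\<^sub>R (a + b) \<in> K"
    and lower: "\<And>q. q \<in> K \<Longrightarrow> \<delta> \<le> dist x q"
    and w: "\<And>n. w n \<in> K" and lim: "(\<lambda>n. dist x (w n)) \<longlonglongrightarrow> \<delta>"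
  shows "Cauchy w"
proof (rule metric_CauchyI)
  fix e :: real assume "0 < e"
  have "\<delta> \<ge> 0"
    using lim by (rule LIMSEQ_le_const) simp
  have "(\<lambda>n. (dist x (w n))\<^sup>2 - \<delta>\<^sup>2) \<longlonglongrightarrow> \<delta>\<^sup>2 - \<delta>\<^sup>2"
    by (intro tendsto_intros lim)
  then have "eventually (\<lambda>n. (dist x (w n))\<^sup>2 - \<delta>\<^sup>2 < e\<^sup>2 / 4) sequentially"
    using \<open>0 < e\<close> by (intro order_tendstoD) auto
  then obtain N where N: "\<And>n. n \<ge> N \<Longrightarrow> (dist x (w n))\<^sup>2 - \<delta>\<^sup>2 < e\<^sup>2 / 4"
    by (auto simp: eventually_sequentially)
  have "dist (w m) (w n) < e" if "m \<ge> N" "n \<ge> N" for m n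
  proof -
    have "\<delta>\<^sup>2 \<le> (norm (x - (1/2) *\<^sub>R (w m + w n)))\<^sup>2"
      using lower[OF midpoint[OF w w]] \<open>\<delta> \<ge> 0\<close> by (simp add: dist_norm power_mono)
    then have "(norm (w m - w n))\<^sup>2 < e\<^sup>2"
      using parallelogram_midpoint[of "w m" "w n" x] N[OF that(1)] N[OF that(2)]
      by (simp add: dist_norm)
    then show ?thesis
      using \<open>0 < e\<close> by (simp add: dist_norm power_less_imp_less_base)
  qed
  then show "\<exists>N. \<forall>m\<ge>N. \<forall>n\<ge>N. dist (w m) (w n) < e" by blast
qed

lemma inner_eq_zero_if_norm_minimal_rat:
  fixes u v :: "'a::real_inner"
  assumes minimal: "\<And>r. r \<in> \<rat> \<Longrightarrow> norm u \<le> norm (u - r *\<^sub>R v)"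
  shows "inner u v = 0"
proof (cases "v = 0")
  case False
  have "continuous_on (closure \<rat>) (\<lambda>r. norm (u - r *\<^sub>R v))"
    by (intro continuous_intros)
  then have "norm u \<le> norm (u - r *\<^sub>R v)" for r
    using continuous_ge_on_closure[of \<rat> "\<lambda>r. norm (u - r *\<^sub>R v)" r "norm u"] minimal
    by (simp add: Rats_closure_real)
  from this[of "inner u v / inner v v"] have "(norm u)\<^sup>2 \<le> (norm (u - (inner u v / inner v v) *\<^sub>R v))\<^sup>2"
    by (simp add: power_mono)
  also have "\<dots> = (norm u)\<^sup>2 - (inner u v)\<^sup>2 / inner v v"
    using False unfolding power2_norm_eq_inner
    by (simp add: inner_diff_left inner_diff_right inner_commute power2_eq_square field_simps)
  finally have "(inner u v)\<^sup>2 / inner v v \<le> 0"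
    by simp
  moreover have "inner v v > 0"
    using False by simp
  ultimately show ?thesis
    by (simp add: divide_le_0_iff)
qed simp

lemma mem_closure_if_orthogonal:
  fixes Q :: "'a::{real_inner, complete_space} set"
  assumes "0 \<in> Q"
    and comb: "\<And>a b r. a \<in> Q \<Longrightarrow> b \<in> Q \<Longrightarrow> r \<in> \<rat> \<Longrightarrow> a + r *\<^sub>R b \<in> Q"
    and orthogonal: "\<And>\<eta>. (\<forall>q\<in>Q. inner \<eta> q = 0) \<Longrightarrow> inner \<eta> x = 0"
  shows "x \<in> closure Q"
proof -
  define \<delta> where "\<delta> = infdist x Q"
  have lower: "\<delta> \<le> dist x q" if "q \<in> Q" for q
    unfolding \<delta>_def using that by (rule infdist_le)
  have "\<exists>q\<in>Q. dist x q < \<delta> + inverse (Suc n)" for n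
  proof -
    have "(INF q\<in>Q. dist x q) = \<delta>"
      unfolding \<delta>_def using \<open>0 \<in> Q\<close> by (subst infdist_notempty) auto
    then have "(INF q\<in>Q. dist x q) < \<delta> + inverse (Suc n)"
      by simp
    moreover have "bdd_below (dist x ` Q)"
      by (rule bdd_belowI2[where m = 0]) simp
    ultimately show ?thesis
      using \<open>0 \<in> Q\<close> cINF_less_iff[of Q "dist x"] by auto
  qed
  then obtain w where w: "\<And>n. w n \<in> Q" and w_close: "\<And>n. dist x (w n) < \<delta> + inverse (Suc n)"
    by metis
  have dist_lim: "(\<lambda>n. dist x (w n)) \<longlonglongrightarrow> \<delta>"
  proof (rule tendsto_sandwich[OF _ _ tendsto_const])
    show "(\<lambda>n. \<delta> + inverse (real (Suc n))) \<longlonglongrightarrow> \<delta>"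
      using tendsto_add[OF tendsto_const LIMSEQ_inverse_real_of_nat, of \<delta>] by simp
    show "\<forall>\<^sub>F n in sequentially. \<delta> \<le> dist x (w n)"
      using lower w by simp
    show "\<forall>\<^sub>F n in sequentially. dist x (w n) \<le> \<delta> + inverse (real (Suc n))"
      using w_close by (simp add: less_imp_le)
  qed
  moreover have "(1/2) *\<^sub>R (a + b) \<in> Q" if "a \<in> Q" "b \<in> Q" for a b
    using comb[OF comb[OF \<open>0 \<in> Q\<close> that(1)] that(2), of "1/2" "1/2"] by (simp add: scaleR_add_right)
  ultimately have "Cauchy w"
    using lower w by (intro Cauchy_minimizing_sequence[where K = Q])
  then obtain p where p: "w \<longlonglongrightarrow> p"
    using Cauchy_convergent_iff convergent_def by blast
  then have "p \<in> closure Q"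
    using w closure_sequential by blast
  have "dist x p = \<delta>"
    using tendsto_dist[OF tendsto_const p] dist_lim by (rule LIMSEQ_unique)
  \<comment> \<open>p is a point of closure Q nearest to x, so x - p is orthogonal to Q.\<close>
  define u where "u = x - p"
  have "inner u v = 0" if "v \<in> Q" for v
  proof (rule inner_eq_zero_if_norm_minimal_rat)
    fix r :: real assume "r \<in> \<rat>"
    have "(\<lambda>n. dist x (w n + r *\<^sub>R v)) \<longlonglongrightarrow> dist x (p + r *\<^sub>R v)"
      by (intro tendsto_intros p)
    then have "\<delta> \<le> dist x (p + r *\<^sub>R v)"
      by (rule LIMSEQ_le_const) (use lower[OF comb[OF w that \<open>r \<in> \<rat>\<close>]] in blast)
    moreover have "x - (p + r *\<^sub>R v) = u - r *\<^sub>R v"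
      by (simp add: u_def)
    ultimately show "norm u \<le> norm (u - r *\<^sub>R v)"
      using \<open>dist x p = \<delta>\<close> by (simp add: u_def dist_norm)
  qed
  then have "inner u x = 0"
    using orthogonal by blast
  moreover have "inner u p = 0"
    using continuous_constant_on_closure[of Q "inner u" 0 p] \<open>\<And>v. v \<in> Q \<Longrightarrow> inner u v = 0\<close>
      \<open>p \<in> closure Q\<close> continuous_on_inner[OF continuous_on_const continuous_on_id]
    by blast
  ultimately have "inner u u = 0"
    by (simp add: u_def inner_diff_right)
  then show ?thesis
    using \<open>p \<in> closure Q\<close> by (simp add: u_def)
qed

section \<open>Separably valued weakly measurable functions\<close>

(* Rational coefficients keep the span countable without changing its closure. *)
definition rat_span :: "'a::real_vector set \<Rightarrow> 'a set" where
  "rat_span B = (\<lambda>xs. \<Sum>(r, b)\<leftarrow>xs. r *\<^sub>R b) ` lists (\<rat> \<times> B)"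

lemma countable_rat_span: "countable B \<Longrightarrow> countable (rat_span B)"
  unfolding rat_span_def by (intro countable_image countable_lists countable_SIGMA countable_rat)

lemma zero_in_rat_span: "0 \<in> rat_span B"
  unfolding rat_span_def by (rule image_eqI[of _ _ "[]"]) auto

lemma subset_rat_span: "B \<subseteq> rat_span B"
  unfolding rat_span_def by (auto intro!: image_eqI[of _ _ "[(1, b)]" for b])

lemma rat_span_add_scaleR:
  assumes "a \<in> rat_span B" "b \<in> rat_span B" "r \<in> \<rat>"
  shows "a + r *\<^sub>R b \<in> rat_span B"
proof -
  obtain xs ys where xs: "xs \<in> lists (\<rat> \<times> B)" "a = (\<Sum>(s, c)\<leftarrow>xs. s *\<^sub>R c)"
    and ys: "ys \<in> lists (\<rat> \<times> B)" "b = (\<Sum>(s, c)\<leftarrow>ys. s *\<^sub>R c)"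
    using assms(1,2) unfolding rat_span_def by blast
  define zs where "zs = xs @ map (\<lambda>(s, c). (r * s, c)) ys"
  have "zs \<in> lists (\<rat> \<times> B)"
    using xs(1) ys(1) \<open>r \<in> \<rat>\<close> by (fastforce simp: zs_def intro: Rats_mult)
  moreover have "r *\<^sub>R (\<Sum>(s, c)\<leftarrow>ys. s *\<^sub>R c) = (\<Sum>(s, c)\<leftarrow>map (\<lambda>(s, c). (r * s, c)) ys. s *\<^sub>R c)"
    by (induction ys) (auto simp: scaleR_add_right)
  ultimately show ?thesis
    unfolding rat_span_def using xs(2) ys(2) by (auto simp: zs_def intro!: image_eqI[of _ _ zs])
qed

lemma two_inner_le_norm_power2_add:
  fixes x y :: "'a::real_inner"
  shows "2 * inner x y \<le> (norm x)\<^sup>2 + (norm y)\<^sup>2"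
  using zero_le_power2[of "norm (x - y)"]
  by (simp add: power2_norm_eq_inner inner_diff_left inner_diff_right inner_commute)

lemma norm_power2_eq_SUP:
  fixes y :: "'a::real_inner"
  assumes "y \<in> closure Q"
  shows "(norm y)\<^sup>2 = (SUP q\<in>Q. 2 * inner q y - (norm q)\<^sup>2)"
proof -
  have gap: "(norm y)\<^sup>2 - (2 * inner q y - (norm q)\<^sup>2) = (norm (y - q))\<^sup>2" for q
    by (simp add: power2_norm_eq_inner inner_diff_left inner_diff_right inner_commute algebra_simps)
  have below: "2 * inner q y - (norm q)\<^sup>2 \<le> (norm y)\<^sup>2" for q
    using two_inner_le_norm_power2_add[of q y] by linarith
  show ?thesis
  proof (rule antisym)
    show "(norm y)\<^sup>2 \<le> (SUP q\<in>Q. 2 * inner q y - (norm q)\<^sup>2)"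
    proof (rule field_le_epsilon)
      fix e :: real assume "0 < e"
      then obtain q where "q \<in> Q" "dist q y < sqrt e"
        using assms \<open>0 < e\<close> unfolding closure_approachable by (meson real_sqrt_gt_0_iff)
      then have "(norm (y - q))\<^sup>2 < (sqrt e)\<^sup>2"
        by (intro power_strict_mono) (auto simp: dist_norm norm_minus_commute)
      then have "(norm (y - q))\<^sup>2 < e"
        using \<open>0 < e\<close> by simp
      then have "(norm y)\<^sup>2 < 2 * inner q y - (norm q)\<^sup>2 + e"
        using gap[of q] by linarith
      also have "\<dots> \<le> (SUP q\<in>Q. 2 * inner q y - (norm q)\<^sup>2) + e"
        using \<open>q \<in> Q\<close> below by (auto intro!: cSUP_upper bdd_aboveI2)
      finally show "(norm y)\<^sup>2 \<le> (SUP q\<in>Q. 2 * inner q y - (norm q)\<^sup>2) + e"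
        by simp
    qed
    show "(SUP q\<in>Q. 2 * inner q y - (norm q)\<^sup>2) \<le> (norm y)\<^sup>2"
      using assms below by (auto intro!: cSUP_least)
  qed
qed

lemma borel_measurable_norm_if_weakly_measurable:
  fixes f :: "'b \<Rightarrow> 'a::real_inner"
  assumes "countable Q" and in_closure: "\<And>t. t \<in> space M \<Longrightarrow> f t \<in> closure Q"
    and weakly_measurable: "\<And>\<eta>. (\<lambda>t. inner \<eta> (f t)) \<in> borel_measurable M"
  shows "(\<lambda>t. norm (f t)) \<in> borel_measurable M"
proof -
  have "(\<lambda>t. SUP q\<in>Q. 2 * inner q (f t) - (norm q)\<^sup>2) \<in> borel_measurable M"
    using \<open>countable Q\<close> weakly_measurable
  proof (intro borel_measurable_cSUP)
    fix t
    have "2 * inner q (f t) - (norm q)\<^sup>2 \<le> (norm (f t))\<^sup>2" for q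
      using two_inner_le_norm_power2_add[of q "f t"] by linarith
    then show "bdd_above ((\<lambda>q. 2 * inner q (f t) - (norm q)\<^sup>2) ` Q)"
      by (rule bdd_aboveI2)
  qed auto
  then have "(\<lambda>t. sqrt (SUP q\<in>Q. 2 * inner q (f t) - (norm q)\<^sup>2)) \<in> borel_measurable M"
    by measurable
  then show ?thesis
    by (rule measurable_cong[THEN iffD1, rotated]) (simp add: in_closure norm_power2_eq_SUP[symmetric])
qed

section \<open>Countably valued and simple approximations\<close>

definition approx_index :: "('b \<Rightarrow> 'a::real_normed_vector) \<Rightarrow> (nat \<Rightarrow> 'a) \<Rightarrow> nat \<Rightarrow> 'b \<Rightarrow> nat" where
  "approx_index f e n t = (LEAST k. norm (f t - e k) \<le> inverse (Suc n))"

lemma measurable_approx_index: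
  assumes "\<And>k. (\<lambda>t. norm (f t - e k)) \<in> borel_measurable M"
  shows "approx_index f e n \<in> measurable M (count_space UNIV)"
  unfolding approx_index_def
  by (intro measurable_Least) (simp add: pred_def assms borel_measurable_le)

lemma norm_diff_approx_index_le:
  assumes "f t \<in> closure (range e)"
  shows "norm (f t - e (approx_index f e n t)) \<le> inverse (Suc n)"
proof -
  obtain k where "dist (e k) (f t) < inverse (Suc n)"
    using assms unfolding closure_approachable
    by (metis imageE inverse_positive_iff_positive of_nat_0_less_iff zero_less_Suc)
  then have "\<exists>k. norm (f t - e k) \<le> inverse (Suc n)"
    by (auto simp: dist_norm norm_minus_commute intro!: less_imp_le)
  then show ?thesis
    unfolding approx_index_def by (rule LeastI_ex)
qed

lemma level_set_in_sets_lebesgue: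
  assumes "S \<in> sets lebesgue" "h \<in> measurable (lebesgue_on S) (count_space UNIV)"
  shows "{t\<in>S. h t = v} \<in> sets lebesgue"
proof -
  have "h -` {v} \<inter> S \<in> sets (lebesgue_on S)"
    using measurable_sets[OF assms(2), of "{v}"] by simp
  then show ?thesis
    using assms(1) sets_restrict_space_iff[of S lebesgue] by (simp add: Int_def conj_commute)
qed

lemma strongly_measurable_on_if_dense_sequence:
  fixes e :: "nat \<Rightarrow> 'a::real_normed_vector"
  assumes "S \<in> sets lebesgue"
    and measurable: "\<And>c. (\<lambda>t. norm (f t - c)) \<in> borel_measurable (lebesgue_on S)"
    and dense: "\<And>t. t \<in> S \<Longrightarrow> f t \<in> closure (range e)"
  shows "strongly_measurable_on S f"
  unfolding strongly_measurable_on_def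
proof (intro exI[of _ "\<lambda>n t. e (approx_index f e n t)"] conjI allI)
  fix n v
  show "countable ((\<lambda>t. e (approx_index f e n t)) ` S)"
    by (rule countable_subset[of _ "range e"]) auto
  show "{t\<in>S. e (approx_index f e n t) = v} \<in> sets lebesgue"
    using measurable_approx_index[OF measurable]
    by (intro level_set_in_sets_lebesgue \<open>S \<in> sets lebesgue\<close> measurable_compose[OF _ measurable_count_space])
next
  have "(\<lambda>n. e (approx_index f e n t)) \<longlonglongrightarrow> f t" if "t \<in> S" for t
  proof -
    have "(\<lambda>n. norm (e (approx_index f e n t) - f t)) \<longlonglongrightarrow> 0"
      using norm_diff_approx_index_le[of f t e, OF dense[OF that]]
      by (intro tendsto_sandwich[OF _ _ tendsto_const LIMSEQ_inverse_real_of_nat])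
        (auto simp: norm_minus_commute)
    then show ?thesis
      by (simp add: tendsto_norm_zero_iff LIM_zero_iff)
  qed
  then show "AE t in lebesgue_on S. (\<lambda>n. e (approx_index f e n t)) \<longlonglongrightarrow> f t"
    by (intro AE_I2) simp
qed

lemma emeasure_index_tail_less:
  fixes h :: "'b \<Rightarrow> nat"
  assumes "h \<in> measurable M (count_space UNIV)" "emeasure M (space M) \<noteq> \<infinity>" "0 < \<epsilon>"
  obtains m where "emeasure M {t \<in> space M. m \<le> h t} < \<epsilon>"
proof -
  define B where "B m = {t \<in> space M. m \<le> h t}" for m
  have "range B \<subseteq> sets M"
    using measurable_sets[OF assms(1), of "{m..}" for m] by (auto simp: B_def vimage_def Int_def conj_commute)
  moreover have "decseq B"
    by (auto simp: decseq_def B_def)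
  moreover have "emeasure M (B m) \<noteq> \<infinity>" for m
    using \<open>range B \<subseteq> sets M\<close> assms(2) emeasure_mono[of "B m" "space M" M]
    by (auto simp: B_def top_unique)
  moreover have "(\<Inter>m. B m) = {}"
    by (auto simp: B_def) (metis Suc_n_not_le_n)
  ultimately have "(\<lambda>m. emeasure M (B m)) \<longlonglongrightarrow> 0"
    using Lim_emeasure_decseq[of B M] by simp
  then obtain m where "emeasure M (B m) < \<epsilon>"
    using order_tendstoD(2)[OF _ \<open>0 < \<epsilon>\<close>] by (metis eventually_sequentially order_refl)
  then show ?thesis
    using that by (simp add: B_def)
qed

lemma bochner_integrable_on_if_dense_sequence:
  fixes e :: "nat \<Rightarrow> 'a::real_normed_vector"
  assumes "S \<in> sets lebesgue" "emeasure lebesgue S \<noteq> \<infinity>"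
    and bounded: "\<And>t. t \<in> S \<Longrightarrow> norm (f t) \<le> C"
    and measurable: "\<And>c. (\<lambda>t. norm (f t - c)) \<in> borel_measurable (lebesgue_on S)"
    and dense: "\<And>t. t \<in> S \<Longrightarrow> f t \<in> closure (range e)"
  shows "bochner_integrable_on S f"
proof -
  define K where "K = approx_index f e"
  have K: "K n \<in> measurable (lebesgue_on S) (count_space UNIV)" for n
    unfolding K_def using measurable by (rule measurable_approx_index)
  have emeasure_lebesgue_on: "emeasure (lebesgue_on S) S = emeasure lebesgue S"
    using \<open>S \<in> sets lebesgue\<close> by (simp add: emeasure_restrict_space)
  define B where "B m n = {t \<in> S. m \<le> K n t}" for m n
  have "\<exists>m. emeasure (lebesgue_on S) (B m n) < ennreal (inverse (real (Suc n)))" for n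
  proof -
    obtain m where
      "emeasure (lebesgue_on S) {t \<in> space (lebesgue_on S). m \<le> K n t} < ennreal (inverse (real (Suc n)))"
      by (rule emeasure_index_tail_less[OF K]) (use emeasure_lebesgue_on assms(2) in auto)
    then show ?thesis
      by (auto simp: B_def)
  qed
  then obtain m where m: "\<And>n. emeasure (lebesgue_on S) (B (m n) n) < ennreal (inverse (real (Suc n)))"
    by metis
  have B: "B m n \<in> sets (lebesgue_on S)" for m n
    using measurable_sets[OF K, of "{m..}" n] by (simp add: B_def vimage_def Int_def conj_commute)
  \<comment> \<open>Cut off to 0 on B (m n) n, which has measure < 1/(n+1) and where the error is at most C.\<close>
  define s where "s n t = (if K n t < m n then e (K n t) else 0)" for n t
  have "(\<integral>\<^sup>+ t. norm (f t - s n t) \<partial>lebesgue_on S)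
      \<le> (\<integral>\<^sup>+ t. ennreal (inverse (real (Suc n))) + ennreal C * indicator (B (m n) n) t \<partial>lebesgue_on S)" for n
  proof (rule nn_integral_mono)
    fix t assume "t \<in> space (lebesgue_on S)"
    then have "t \<in> S" by simp
    show "ennreal (norm (f t - s n t)) \<le> ennreal (inverse (real (Suc n))) + ennreal C * indicator (B (m n) n) t"
    proof (cases "K n t < m n")
      case True
      then have "norm (f t - s n t) \<le> inverse (real (Suc n))"
        using norm_diff_approx_index_le[of f t e, OF dense[OF \<open>t \<in> S\<close>]] by (simp add: s_def K_def)
      then show ?thesis
        by (simp add: add_increasing2 ennreal_leI)
    next
      case False
      then show ?thesis
        using bounded[OF \<open>t \<in> S\<close>] \<open>t \<in> S\<close> by (simp add: s_def B_def add_increasing ennreal_leI)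
    qed
  qed
  also have "\<dots> n = ennreal (inverse (real (Suc n))) * emeasure lebesgue S
      + ennreal C * emeasure (lebesgue_on S) (B (m n) n)" for n
    using B emeasure_lebesgue_on by (subst nn_integral_add) (auto simp: nn_integral_cmult_indicator)
  also have "\<dots> n \<le> ennreal (inverse (real (Suc n))) * emeasure lebesgue S
      + ennreal C * ennreal (inverse (real (Suc n)))" for n
    using m[of n] by (intro add_left_mono mult_left_mono) auto
  also have "\<dots> n = (emeasure lebesgue S + ennreal C) * ennreal (inverse (real (Suc n)))" for n
    by (simp add: distrib_left mult.commute)
  finally have integral_bound: "(\<integral>\<^sup>+ t. norm (f t - s n t) \<partial>lebesgue_on S)
      \<le> (emeasure lebesgue S + ennreal C) * ennreal (inverse (real (Suc n)))" for n .
  have "emeasure lebesgue S + ennreal C < top"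
    using assms(2) by (simp add: less_top[symmetric])
  moreover have "(\<lambda>n. ennreal (inverse (real (Suc n)))) \<longlonglongrightarrow> 0"
    using tendsto_ennrealI[OF LIMSEQ_inverse_real_of_nat] by simp
  ultimately have "(\<lambda>n. (emeasure lebesgue S + ennreal C) * ennreal (inverse (real (Suc n))))
      \<longlonglongrightarrow> (emeasure lebesgue S + ennreal C) * 0"
    by (rule ennreal_tendsto_cmult)
  then have bound_lim: "(\<lambda>n. (emeasure lebesgue S + ennreal C) * ennreal (inverse (real (Suc n)))) \<longlonglongrightarrow> 0"
    by simp
  have "(\<lambda>n. \<integral>\<^sup>+ t. norm (f t - s n t) \<partial>lebesgue_on S) \<longlonglongrightarrow> 0"
    by (rule tendsto_sandwich[OF _ _ tendsto_const bound_lim])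
      (simp_all add: integral_bound always_eventually del: of_nat_Suc)
  moreover have "finite (s n ` S)" for n
    by (rule finite_subset[of _ "insert 0 (e ` {..<m n})"]) (auto simp: s_def)
  moreover have "{t\<in>S. s n t = v} \<in> sets lebesgue" for n v
  proof (rule level_set_in_sets_lebesgue[OF \<open>S \<in> sets lebesgue\<close>])
    show "s n \<in> measurable (lebesgue_on S) (count_space UNIV)"
      unfolding s_def using measurable_compose[OF K measurable_count_space, of "\<lambda>k. if k < m n then e k else 0"]
      by simp
  qed
  moreover have "(\<lambda>t. norm (f t - s n t)) \<in> borel_measurable (lebesgue_on S)" for n
    unfolding s_def
    using measurable_compose_countable'[of UNIV "\<lambda>k t. norm (f t - (if k < m n then e k else 0))"
        "lebesgue_on S" borel "K n"] measurable K
    by simp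
  ultimately show ?thesis
    unfolding bochner_integrable_on_def by blast
qed

lemma dense_sequence_if_weakly_continuous:
  fixes f :: "'b::{metric_space, second_countable_topology} \<Rightarrow> 'a::{real_inner, complete_space}"
  assumes "closed S" and weakly_continuous: "\<And>\<eta>. continuous_on S (\<lambda>t. inner \<eta> (f t))"
  obtains e :: "nat \<Rightarrow> 'a" where "\<And>t. t \<in> S \<Longrightarrow> f t \<in> closure (range e)"
proof -
  obtain T where "countable T" "T \<subseteq> S" "S \<subseteq> closure T"
    by (rule separable)
  define Q where "Q = rat_span (f ` T)"
  have "f t \<in> closure Q" if "t \<in> S" for t
    unfolding Q_def
  proof (rule mem_closure_if_orthogonal[OF zero_in_rat_span rat_span_add_scaleR])
    fix \<eta> assume "\<forall>q\<in>rat_span (f ` T). inner \<eta> q = 0"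
    then have "inner \<eta> (f s) = 0" if "s \<in> T" for s
      using subset_rat_span that by blast
    moreover have "continuous_on (closure T) (\<lambda>t. inner \<eta> (f t))"
      using weakly_continuous closure_minimal[OF \<open>T \<subseteq> S\<close> \<open>closed S\<close>] by (rule continuous_on_subset)
    ultimately show "inner \<eta> (f t) = 0"
      using \<open>S \<subseteq> closure T\<close> \<open>t \<in> S\<close> by (auto intro: continuous_constant_on_closure)
  qed
  moreover have "range (from_nat_into Q) = Q"
    using \<open>countable T\<close> zero_in_rat_span
    by (intro range_from_nat_into) (auto simp: Q_def intro: countable_rat_span)
  ultimately show ?thesis
    using that by metis
qed

lemma strongly_measurable_bochner_integrable_if_weakly_continuous:
  fixes f :: "real \<Rightarrow> 'a::{real_inner, complete_space}"
  assumes "closed S" "emeasure lebesgue S \<noteq> \<infinity>"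
    and weakly_continuous: "\<And>\<eta>. continuous_on S (\<lambda>t. inner \<eta> (f t))"
    and bounded: "\<And>t. t \<in> S \<Longrightarrow> norm (f t) \<le> C"
  shows "strongly_measurable_on S f \<and> bochner_integrable_on S f"
proof -
  obtain e :: "nat \<Rightarrow> 'a" where dense: "\<And>t. t \<in> S \<Longrightarrow> f t \<in> closure (range e)"
    using dense_sequence_if_weakly_continuous[OF assms(1) weakly_continuous] by blast
  have "S \<in> sets lebesgue"
    using \<open>closed S\<close> by simp
  have "(\<lambda>t. norm (f t - c)) \<in> borel_measurable (lebesgue_on S)" for c
  proof (rule borel_measurable_norm_if_weakly_measurable)
    show "countable ((\<lambda>q. q - c) ` range e)"
      by simp
    show "f t - c \<in> closure ((\<lambda>q. q - c) ` range e)" if "t \<in> space (lebesgue_on S)" for t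
      using dense[of t] that by (simp add: closure_translation_subtract)
    show "(\<lambda>t. inner \<eta> (f t - c)) \<in> borel_measurable (lebesgue_on S)" for \<eta>
      using weakly_continuous[of \<eta>] \<open>S \<in> sets lebesgue\<close>
      by (auto simp: inner_diff_right intro!: continuous_imp_measurable_on_sets_lebesgue continuous_intros)
  qed
  then show ?thesis
    using \<open>S \<in> sets lebesgue\<close> assms(2) bounded dense
    by (blast intro: strongly_measurable_on_if_dense_sequence bochner_integrable_on_if_dense_sequence)
qed

section \<open>Complex Hilbert spaces and CP-semigroups\<close>

lemma norm_jmul: "norm (jmul x) = norm x"
  by (simp add: norm_eq_sqrt_inner inner_jmul)

lemma bounded_linear_cscale: "bounded_linear (cscale c :: 'h::chilbert \<Rightarrow> 'h)"
proof -
  have "bounded_linear (jmul :: 'h \<Rightarrow> 'h)"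
    by (rule bounded_linear_intro[where K = 1]) (auto simp: jmul_add jmul_scaleR norm_jmul)
  then show ?thesis
    unfolding cscale_def[abs_def]
    by (intro bounded_linear_add bounded_linear_scaleR_right bounded_linear_ident
        bounded_linear_compose[OF bounded_linear_scaleR_right])
qed

lemma cinner_add_right: "cinner x (y + z) = cinner x y + cinner x z"
  by (rule complex_eqI) (simp_all add: cinner_def inner_add_right jmul_add)

lemma cinner_cscale_right: "cinner x (cscale c y) = c * cinner x y"
  by (rule complex_eqI)
    (simp_all add: cinner_def cscale_def inner_add_right jmul_add jmul_scaleR jmul_jmul algebra_simps)

lemma cinner_zero_left [simp]: "cinner 0 y = 0"
  by (simp add: cinner_def Complex_eq_0)

lemma Re_cinner [simp]: "Re (cinner x y) = inner x y"
  by (simp add: cinner_def)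

lemma continuous_map_sigma_weak_vector_functional:
  fixes \<eta> \<xi> :: "'h::chilbert"
  shows "continuous_map sigma_weak_topology euclidean (\<lambda>B::'h \<Rightarrow>\<^sub>L 'h. cinner \<eta> (blinfun_apply B \<xi>))"
proof -
  \<comment> \<open>It is one of the generating functionals, for square-summable sequences supported at 0.\<close>
  define xi where "xi n = (if n = 0 then \<eta> else 0)" for n :: nat
  define eta where "eta n = (if n = 0 then \<xi> else 0)" for n :: nat
  have "(\<lambda>n. (norm (xi n))\<^sup>2) = (\<lambda>n. if n = 0 then (norm \<eta>)\<^sup>2 else 0)"
    "(\<lambda>n. (norm (eta n))\<^sup>2) = (\<lambda>n. if n = 0 then (norm \<xi>)\<^sup>2 else 0)"
    by (auto simp: xi_def eta_def)
  then have "summable (\<lambda>n. (norm (xi n))\<^sup>2)" "summable (\<lambda>n. (norm (eta n))\<^sup>2)"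
    using summable_single[of 0] by simp_all
  moreover have "(\<lambda>B::'h \<Rightarrow>\<^sub>L 'h. \<Sum>n. cinner (xi n) (blinfun_apply B (eta n))) = (\<lambda>B. cinner \<eta> (blinfun_apply B \<xi>))"
  proof
    fix B :: "'h \<Rightarrow>\<^sub>L 'h"
    have "(\<lambda>n. cinner (xi n) (blinfun_apply B (eta n))) = (\<lambda>n. if n = 0 then cinner \<eta> (blinfun_apply B \<xi>) else 0)"
      by (auto simp: xi_def eta_def)
    then show "(\<Sum>n. cinner (xi n) (blinfun_apply B (eta n))) = cinner \<eta> (blinfun_apply B \<xi>)"
      using sums_unique[OF sums_single[of 0 "\<lambda>_. cinner \<eta> (blinfun_apply B \<xi>)"]] by simp
  qed
  ultimately have "openin sigma_weak_topology ((\<lambda>B::'h \<Rightarrow>\<^sub>L 'h. cinner \<eta> (blinfun_apply B \<xi>)) -` U)"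
    if "open U" for U
    unfolding sigma_weak_topology_def using \<open>open U\<close>
    by (intro topology_generated_by_Basis) (metis (mono_tags, lifting) mem_Collect_eq)
  moreover have "topspace (sigma_weak_topology :: ('h \<Rightarrow>\<^sub>L 'h) topology) = UNIV"
    using calculation[of UNIV] openin_subset by auto
  ultimately show ?thesis
    by (auto simp: continuous_map_def open_openin[symmetric] vimage_def)
qed

lemma vector_functional_in_predual:
  fixes \<eta> \<xi> :: "'h::chilbert"
  shows "(\<lambda>B. cinner \<eta> (blinfun_apply B \<xi>)) \<in> predual M"
proof -
  have "bounded_linear (\<lambda>x. cscale c (blinfun_apply A x))" for c and A :: "'h \<Rightarrow>\<^sub>L 'h"
    using bounded_linear_cscale blinfun.bounded_linear_right by (rule bounded_linear_compose)
  then show ?thesis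
    unfolding predual_def
    using continuous_map_from_subtopology[OF continuous_map_sigma_weak_vector_functional]
    by (simp add: plus_blinfun.rep_eq cinner_add_right opscale_def bounded_linear_Blinfun_apply
        cinner_cscale_right)
qed

lemma cp_semigroup_weakly_continuous:
  assumes "cp_semigroup M \<phi>" "A \<in> M"
  shows "continuous_on {0..} (\<lambda>t. inner \<eta> (blinfun_apply (\<phi> t A) \<xi>))"
  unfolding continuous_on_def
proof
  fix t0 :: real assume "t0 \<in> {0..}"
  have "\<forall>A\<in>M. \<forall>\<omega>\<in>predual M. \<forall>t0\<ge>0. ((\<lambda>t. \<omega> (\<phi> t A)) \<longlongrightarrow> \<omega> (\<phi> t0 A)) (at t0 within {0..})"
    using assms(1) unfolding cp_semigroup_def by blast
  then have "((\<lambda>t. cinner \<eta> (blinfun_apply (\<phi> t A) \<xi>)) \<longlongrightarrow> cinner \<eta> (blinfun_apply (\<phi> t0 A) \<xi>)) (at t0 within {0..})"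
    using assms(2) vector_functional_in_predual \<open>t0 \<in> {0..}\<close> by fastforce
  then show "((\<lambda>t. inner \<eta> (blinfun_apply (\<phi> t A) \<xi>)) \<longlongrightarrow> inner \<eta> (blinfun_apply (\<phi> t0 A) \<xi>)) (at t0 within {0..})"
    using tendsto_Re by fastforce
qed

lemma cp_semigroup_norm_apply_le:
  assumes "cp_semigroup M \<phi>" "A \<in> M" "t \<ge> 0"
  shows "norm (blinfun_apply (\<phi> t A) \<xi>) \<le> norm A * norm \<xi>"
proof -
  have "norm (\<phi> t A) \<le> norm A"
    using assms unfolding cp_semigroup_def contractive_normal_cp_map_def by blast
  then show ?thesis
    using norm_blinfun[of "\<phi> t A" \<xi>] mult_right_mono[of "norm (\<phi> t A)" "norm A" "norm \<xi>"] by simp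
qed

theorem lemma2p2:
  fixes M :: "('h::chilbert \<Rightarrow>\<^sub>L 'h) set"
    and \<phi> :: "real \<Rightarrow> ('h \<Rightarrow>\<^sub>L 'h) \<Rightarrow> ('h \<Rightarrow>\<^sub>L 'h)"
    and \<xi> :: 'h
    and A :: "'h \<Rightarrow>\<^sub>L 'h"
  assumes "von_neumann_algebra M"
    and "cp_semigroup M \<phi>"
    and "A \<in> M"
  shows "strongly_measurable_on {0..1} (\<lambda>t. blinfun_apply (\<phi> t A) \<xi>)
       \<and> bochner_integrable_on {0..1} (\<lambda>t. blinfun_apply (\<phi> t A) \<xi>)"
proof (rule strongly_measurable_bochner_integrable_if_weakly_continuous)
  show "continuous_on {0..1} (\<lambda>t. inner \<eta> (blinfun_apply (\<phi> t A) \<xi>))" for \<eta>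
    using cp_semigroup_weakly_continuous[OF assms(2,3)] by (rule continuous_on_subset) auto
  show "norm (blinfun_apply (\<phi> t A) \<xi>) \<le> norm A * norm \<xi>" if "t \<in> {0..1}" for t
    using cp_semigroup_norm_apply_le[OF assms(2,3)] that by simp
qed auto

end
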